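(* For all $\lambda>0$ and all even $L\ge2$, $$Z^{\mathrm{per}}_{R_{2\times L},\lambda}(E)\ge\Big(1+\tfrac12\lambda^{-1/2}\Big)^L,$$ where $E$ is the event that every tile has even horizontal parity (equivalently, $\sigma(x,y)=1$ implies $x$ odd).
   Context: Tiles: $T_{(x,y)}=[x-1,x+1]\times[y-1,y+1]$; $\Omega=\{\sigma\in\{0,1\}^{\mathbb{Z}^2}: \sigma(u)=\sigma(v)=1,u\ne v\Rightarrow\mathrm{int}(T_u)\cap\mathrm{int}(T_v)=\emptyset\}$. The parity of the tile centered at $(x,y)$ is $(x-1\bmod 2,\,y-1\bmod2)$; its first component is the horizontal parity. $R_{K\times L}=[0,K]\times[0,L]$. Faces are unit squares with integer corners, vacant if in no tile. For a rectangle $\Lambda$, $w_{\Lambda,\lambda}(\sigma)=\lambda^{-\frac14\#\{\text{vacant faces}\subset\Lambda\}}$; $\Omega^{\mathrm{per}}_\Lambda$ = configurations in $\Omega$ periodic under translations by $(\mathrm{Width}\Lambda,0)$ and $(0,\mathrm{Height}\Lambda)$; for an event $E$, $Z^{\mathrm{per}}_{\Lambda,\lambda}(E)=\sum_{\sigma\in E\cap\Omega^{\mathrm{per}}_\Lambda}w_{\Lambda,\lambda}(\sigma)$. *)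

theory Defs
  imports "HOL-Analysis.Analysis"
begin

type_synonym config = "int \<times> int \<Rightarrow> nat"

definition tile :: "int \<times> int \<Rightarrow> (real \<times> real) set" where
  "tile u = {real_of_int (fst u) - 1 .. real_of_int (fst u) + 1} \<times>
            {real_of_int (snd u) - 1 .. real_of_int (snd u) + 1}"

definition Omega :: "config set" where
  "Omega = {\<sigma>. (\<forall>u. \<sigma> u \<in> {0,1}) \<and>
     (\<forall>u v. \<sigma> u = 1 \<and> \<sigma> v = 1 \<and> u \<noteq> v \<longrightarrow> interior (tile u) \<inter> interior (tile v) = {})}"

definition hparity :: "int \<times> int \<Rightarrow> int" where
  "hparity u = (fst u - 1) mod 2"

definition rect :: "nat \<Rightarrow> nat \<Rightarrow> (real \<times> real) set" where
  "rect K L = {0 .. real K} \<times> {0 .. real L}"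

definition face :: "int \<times> int \<Rightarrow> (real \<times> real) set" where
  "face f = {real_of_int (fst f) .. real_of_int (fst f) + 1} \<times>
            {real_of_int (snd f) .. real_of_int (snd f) + 1}"

definition vacant :: "config \<Rightarrow> int \<times> int \<Rightarrow> bool" where
  "vacant \<sigma> f \<longleftrightarrow> \<not> (\<exists>u. \<sigma> u = 1 \<and> face f \<subseteq> tile u)"

definition n_vacant :: "nat \<Rightarrow> nat \<Rightarrow> config \<Rightarrow> nat" where
  "n_vacant K L \<sigma> = card {f. face f \<subseteq> rect K L \<and> vacant \<sigma> f}"

definition weight :: "nat \<Rightarrow> nat \<Rightarrow> real \<Rightarrow> config \<Rightarrow> real" where
  "weight K L lam \<sigma> = lam powr (- (1/4) * real (n_vacant K L \<sigma>))"

definition Omega_per :: "nat \<Rightarrow> nat \<Rightarrow> config set" where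
  "Omega_per K L = {\<sigma> \<in> Omega. \<forall>x y. \<sigma> (x + int K, y) = \<sigma> (x, y) \<and> \<sigma> (x, y + int L) = \<sigma> (x, y)}"

definition Z_per :: "nat \<Rightarrow> nat \<Rightarrow> real \<Rightarrow> config set \<Rightarrow> real" where
  "Z_per K L lam E = (\<Sum>\<sigma> \<in> E \<inter> Omega_per K L. weight K L lam \<sigma>)"

definition E_even_h :: "config set" where
  "E_even_h = {\<sigma>. \<forall>u. \<sigma> u = 1 \<longrightarrow> hparity u = 0}"

end

theory Submission
  imports Defs "HOL-Library.Periodic_Fun"
begin

text \<open>
  In a configuration of the event all tiles sit at odd abscissae, and periodicity of width 2
  makes every odd column a copy of the column \<open>x = 1\<close>. Such a configuration is therefore a
  cyclic binary word of length \<open>L\<close> without two adjacent letters 1, and the two faces in row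
  \<open>i\<close> are vacant exactly when rows \<open>i\<close> and \<open>i + 1\<close> both carry no tile. With
  \<open>t = \<lambda> powr (-1/2)\<close> the weight of a configuration is \<open>t\<close> to the number of cyclically adjacent
  pairs of 0s, so the partition function is the trace of \<open>T\<^sup>L\<close> for the transfer matrix
  \<open>T = [[t,1],[1,0]]\<close>, i.e. \<open>\<mu>\<^sup>L + \<nu>\<^sup>L\<close> with eigenvalues \<open>\<mu>,\<nu> = (t \<plusminus> \<surd>(t\<^sup>2+4))/2\<close>.
  For even \<open>L\<close> this is at least \<open>\<mu>\<^sup>L \<ge> (1 + t/2)\<^sup>L\<close>.
\<close>

definition transfer :: "real \<Rightarrow> bool \<Rightarrow> bool \<Rightarrow> real" where
  "transfer t a b = (if a \<and> b then 0 else if a \<or> b then 1 else t)"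

fun path_weight :: "real \<Rightarrow> bool \<Rightarrow> bool list \<Rightarrow> real" where
  "path_weight t a [] = 1"
| "path_weight t a (x # xs) = transfer t a x * path_weight t x xs"

text \<open>The entry \<open>(a, b)\<close> of \<open>T ^ (n + 1)\<close>, rows and columns indexed by \<open>False, True\<close>.\<close>
definition walk_sum :: "real \<Rightarrow> nat \<Rightarrow> bool \<Rightarrow> bool \<Rightarrow> real" where
  "walk_sum t n a b = (\<Sum>xs | length xs = n. path_weight t a (xs @ [b]))"

definition walk_trace :: "real \<Rightarrow> nat \<Rightarrow> real" where
  "walk_trace t n = walk_sum t n False False + walk_sum t n True True"

lemma finite_bool_lists_length: "finite {xs :: bool list. length xs = n}"
  using finite_lists_length_eq[of "UNIV :: bool set" n] by simp

lemma sum_bool_lists_length_Suc: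
  "(\<Sum>xs | length xs = Suc n. f xs) = (\<Sum>x\<in>UNIV. \<Sum>xs | length xs = n. f (x # (xs :: bool list)))"
proof -
  have lists: "{xs :: bool list. length xs = Suc n} = case_prod (#) ` (UNIV \<times> {xs. length xs = n})"
    by (auto simp: length_Suc_conv)
  have inj: "inj_on (case_prod (#)) (UNIV \<times> {xs :: bool list. length xs = n})"
    by (auto simp: inj_on_def)
  show ?thesis
    unfolding lists sum.reindex[OF inj] by (simp add: sum.cartesian_product case_prod_beta)
qed

lemma walk_sum_0: "walk_sum t 0 a b = transfer t a b"
  by (simp add: walk_sum_def)

lemma walk_sum_Suc: "walk_sum t (Suc n) a b = (\<Sum>x\<in>UNIV. transfer t a x * walk_sum t n x b)"
  unfolding walk_sum_def sum_bool_lists_length_Suc by (simp add: sum_distrib_left)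

text \<open>Cayley--Hamilton for \<open>T\<close>: \<open>T\<^sup>2 = t T + I\<close>.\<close>
lemma walk_sum_Suc_Suc: "walk_sum t (Suc (Suc n)) a b = t * walk_sum t (Suc n) a b + walk_sum t n a b"
  by (cases a) (simp_all add: walk_sum_Suc[of t "Suc n"] walk_sum_Suc[of t n] UNIV_bool transfer_def
      algebra_simps)

lemma two_term_recurrence_unique:
  fixes f g :: "nat \<Rightarrow> 'a :: semiring"
  assumes "f 0 = g 0" and "f 1 = g 1"
    and "\<And>n. f (Suc (Suc n)) = p * f (Suc n) + f n"
    and "\<And>n. g (Suc (Suc n)) = p * g (Suc n) + g n"
  shows "f n = g n"
proof -
  have "f n = g n \<and> f (Suc n) = g (Suc n)"
    by (induction n) (use assms in simp_all)
  then show ?thesis ..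
qed

lemma walk_trace_eq_power_sum:
  fixes m v t :: real
  assumes sum: "m + v = t" and prod: "m * v = -1"
  shows "walk_trace t n = m ^ Suc n + v ^ Suc n"
proof (rule two_term_recurrence_unique[where p = t and f = "walk_trace t"
      and g = "\<lambda>n. m ^ Suc n + v ^ Suc n"])
  have "m\<^sup>2 + v\<^sup>2 = (m + v)\<^sup>2 - 2 * (m * v)"
    by (simp add: power2_eq_square algebra_simps)
  then show "walk_trace t 1 = m ^ Suc 1 + v ^ Suc 1"
    using sum prod by (simp add: walk_trace_def walk_sum_Suc walk_sum_0 UNIV_bool transfer_def
        power2_eq_square)
  show "walk_trace t 0 = m ^ Suc 0 + v ^ Suc 0"
    using sum by (simp add: walk_trace_def walk_sum_0 transfer_def)
  show "walk_trace t (Suc (Suc n)) = t * walk_trace t (Suc n) + walk_trace t n" for n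
    by (simp add: walk_trace_def walk_sum_Suc_Suc algebra_simps)
  have root_power: "x ^ Suc (Suc (Suc n)) = t * x ^ Suc (Suc n) + x ^ Suc n"
    if "x = m \<or> x = v" for x n
  proof -
    have "x * x = t * x + 1"
      using that sum prod by (auto simp: algebra_simps)
    then have "x ^ Suc n * (x * x) = x ^ Suc n * (t * x + 1)" by simp
    then show ?thesis by (simp add: algebra_simps)
  qed
  show "m ^ Suc (Suc (Suc n)) + v ^ Suc (Suc (Suc n))
      = t * (m ^ Suc (Suc n) + v ^ Suc (Suc n)) + (m ^ Suc n + v ^ Suc n)" for n
    using root_power[of m n] root_power[of v n] by (simp add: algebra_simps)
qed

definition cyclic_weight :: "real \<Rightarrow> bool list \<Rightarrow> real" where
  "cyclic_weight t s = (\<Prod>i<length s. transfer t (s ! i) (s ! ((i + 1) mod length s)))"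

definition cyclically_independent :: "bool list \<Rightarrow> bool" where
  "cyclically_independent s \<longleftrightarrow> (\<forall>i<length s. \<not> (s ! i \<and> s ! ((i + 1) mod length s)))"

definition empty_pairs :: "bool list \<Rightarrow> nat set" where
  "empty_pairs s = {i. i < length s \<and> \<not> s ! i \<and> \<not> s ! ((i + 1) mod length s)}"

lemma cyclic_weight_eq:
  "cyclic_weight t s = (if cyclically_independent s then t ^ card (empty_pairs s) else 0)"
proof (cases "cyclically_independent s")
  case True
  then have "cyclic_weight t s
      = (\<Prod>i<length s. if \<not> s ! i \<and> \<not> s ! ((i + 1) mod length s) then t else 1)"
    unfolding cyclic_weight_def cyclically_independent_def
    by (intro prod.cong) (auto simp: transfer_def)
  also have "\<dots> = t ^ card (empty_pairs s)"
    by (simp add: prod.If_cases empty_pairs_def Int_def)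
  finally show ?thesis using True by simp
next
  case False
  then show ?thesis
    by (auto simp: cyclic_weight_def cyclically_independent_def transfer_def intro!: prod_zero)
qed

lemma path_weight_eq_prod: "path_weight t a ys = (\<Prod>i<length ys. transfer t ((a # ys) ! i) (ys ! i))"
proof (induction ys arbitrary: a)
  case (Cons y ys)
  show ?case by (simp only: length_Cons prod.lessThan_Suc_shift) (simp add: Cons)
qed simp

lemma cyclic_weight_Cons: "cyclic_weight t (a # xs) = path_weight t a (xs @ [a])"
  unfolding cyclic_weight_def path_weight_eq_prod
proof (rule prod.cong)
  fix i assume "i \<in> {..<length (xs @ [a])}"
  then have "i < length xs \<or> i = length xs" by auto
  then show "transfer t ((a # xs) ! i) ((a # xs) ! ((i + 1) mod length (a # xs)))
      = transfer t ((a # xs @ [a]) ! i) ((xs @ [a]) ! i)"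
    by (auto simp: nth_append nth_Cons split: nat.split)
qed simp

lemma sum_cyclic_weight: "(\<Sum>s | length s = Suc n. cyclic_weight t s) = walk_trace t n"
  unfolding sum_bool_lists_length_Suc cyclic_weight_Cons walk_trace_def walk_sum_def
  by (simp add: UNIV_bool)

lemma sum_cyclic_weight_ge:
  assumes "0 \<le> t" and "even n" and "0 < n"
  shows "(1 + t / 2) ^ n \<le> (\<Sum>s | length s = n. cyclic_weight t s)"
proof -
  define r where "r = sqrt (t\<^sup>2 + 4)"
  define m where "m = (t + r) / 2"
  define v where "v = (t - r) / 2"
  have "m + v = t" by (simp add: m_def v_def field_simps)
  moreover have "m * v = -1"
    by (simp add: m_def v_def r_def power2_eq_square algebra_simps)
  ultimately have trace: "(\<Sum>s | length s = n. cyclic_weight t s) = m ^ n + v ^ n"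
    using sum_cyclic_weight[where n = "n - 1" and t = t] walk_trace_eq_power_sum \<open>0 < n\<close> by simp
  have "sqrt 4 \<le> r" unfolding r_def by (rule real_sqrt_le_mono) simp
  then have "1 + t / 2 \<le> m" by (simp add: m_def)
  then have "(1 + t / 2) ^ n \<le> m ^ n" using \<open>0 \<le> t\<close> by (intro power_mono) simp_all
  also have "\<dots> \<le> m ^ n + v ^ n" using \<open>even n\<close> by (simp add: zero_le_even_power)
  finally show ?thesis using trace by simp
qed

lemma open_intervals_overlap_iff:
  "{real_of_int a - 1<..<real_of_int a + 1} \<inter> {real_of_int b - 1<..<real_of_int b + 1} \<noteq> {}
    \<longleftrightarrow> \<bar>a - b\<bar> < 2"
  by (simp add: abs_less_iff) linarith

lemma interior_tiles_overlap_iff: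
  "interior (tile u) \<inter> interior (tile v) \<noteq> {} \<longleftrightarrow> \<bar>fst u - fst v\<bar> < 2 \<and> \<bar>snd u - snd v\<bar> < 2"
  unfolding tile_def interior_Times interior_atLeastAtMost_real Times_Int_Times
  by (simp only: Times_empty de_Morgan_disj open_intervals_overlap_iff)

lemma face_subset_tile_iff:
  "face f \<subseteq> tile u \<longleftrightarrow> fst u - 1 \<le> fst f \<and> fst f \<le> fst u \<and> snd u - 1 \<le> snd f \<and> snd f \<le> snd u"
  unfolding face_def tile_def times_subset_iff by auto

lemma face_subset_rect_iff:
  "face f \<subseteq> rect K L \<longleftrightarrow> 0 \<le> fst f \<and> fst f + 1 \<le> int K \<and> 0 \<le> snd f \<and> snd f + 1 \<le> int L"
  unfolding face_def rect_def times_subset_iff by auto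

definition even_strip :: "nat \<Rightarrow> config set" where
  "even_strip L = E_even_h \<inter> Omega_per 2 L"

definition column_word :: "nat \<Rightarrow> config \<Rightarrow> bool list" where
  "column_word L \<sigma> = map (\<lambda>i. \<sigma> (1, int i) = 1) [0..<L]"

lemma even_strip_zero_one: "\<sigma> \<in> even_strip L \<Longrightarrow> \<sigma> u \<in> {0, 1}"
  unfolding even_strip_def Omega_per_def Omega_def by blast

lemma even_strip_eq:
  assumes "\<sigma> \<in> even_strip L"
  shows "\<sigma> (x, y) = (if odd x then \<sigma> (1, y mod int L) else 0)"
proof (cases "odd x")
  case True
  interpret row: periodic_fun_simple "\<lambda>z. \<sigma> (z, y)" 2
    using assms by unfold_locales (simp add: even_strip_def Omega_per_def)
  interpret column: periodic_fun_simple "\<lambda>z. \<sigma> (1, z)" "int L"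
    using assms by unfold_locales (simp add: even_strip_def Omega_per_def)
  from row.plus_of_int[of "x mod 2" "x div 2"] column.plus_of_int[of "y mod int L" "y div int L"]
  have "\<sigma> (x, y) = \<sigma> (x mod 2, y)" and "\<sigma> (1, y) = \<sigma> (1, y mod int L)"
    by (simp_all add: mult.commute)
  moreover have "x mod 2 = 1" using True by presburger
  ultimately show ?thesis using True by simp
next
  case False
  have "\<sigma> (x, y) \<noteq> 1"
  proof
    assume "\<sigma> (x, y) = 1"
    then have "(x - 1) mod 2 = 0"
      using assms by (auto simp: even_strip_def E_even_h_def hparity_def)
    with False show False by presburger
  qed
  then show ?thesis using False even_strip_zero_one[OF assms] by auto
qed

lemma length_column_word [simp]: "length (column_word L \<sigma>) = L"
  by (simp add: column_word_def)

lemma column_word_nth: "i < L \<Longrightarrow> column_word L \<sigma> ! i \<longleftrightarrow> \<sigma> (1, int i) = 1"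
  by (simp add: column_word_def)

lemma column_word_inj_on:
  assumes "0 < L"
  shows "inj_on (column_word L) (even_strip L)"
proof (rule inj_onI)
  fix \<sigma> \<tau>
  assume \<sigma>: "\<sigma> \<in> even_strip L" and \<tau>: "\<tau> \<in> even_strip L" and eq: "column_word L \<sigma> = column_word L \<tau>"
  have "\<sigma> (x, y) = \<tau> (x, y)" for x y
  proof -
    define i where "i = nat (y mod int L)"
    have "i < L" and i: "int i = y mod int L"
      using assms by (simp_all add: i_def nat_less_iff)
    moreover have "column_word L \<sigma> ! i = column_word L \<tau> ! i"
      using eq by simp
    ultimately have "\<sigma> (1, int i) = 1 \<longleftrightarrow> \<tau> (1, int i) = 1"
      by (simp add: column_word_nth)
    moreover have "\<sigma> (1, int i) \<in> {0, 1}" "\<tau> (1, int i) \<in> {0, 1}"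
      using even_strip_zero_one \<sigma> \<tau> by blast+
    ultimately have "\<sigma> (1, int i) = \<tau> (1, int i)" by auto
    then show ?thesis
      using even_strip_eq[OF \<sigma>, of x y] even_strip_eq[OF \<tau>, of x y] i by simp
  qed
  then show "\<sigma> = \<tau>" by (simp add: fun_eq_iff)
qed

lemma even_strip_covered_iff:
  assumes \<sigma>: "\<sigma> \<in> even_strip L" and "0 \<le> a" "a \<le> 1"
  shows "(\<exists>u. \<sigma> u = 1 \<and> face (a, b) \<subseteq> tile u) \<longleftrightarrow> \<sigma> (1, b) = 1 \<or> \<sigma> (1, b + 1) = 1"
proof
  assume "\<exists>u. \<sigma> u = 1 \<and> face (a, b) \<subseteq> tile u"
  then obtain x y where occupied: "\<sigma> (x, y) = 1" and covers: "face (a, b) \<subseteq> tile (x, y)"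
    by auto
  have "odd x"
    using occupied even_strip_eq[OF \<sigma>, of x y] by (auto split: if_splits)
  moreover have "x - 1 \<le> a" "a \<le> x" "y - 1 \<le> b" "b \<le> y"
    using covers by (auto simp: face_subset_tile_iff)
  ultimately have "x = 1" and "y = b \<or> y = b + 1"
    using assms(2,3) by presburger+
  then show "\<sigma> (1, b) = 1 \<or> \<sigma> (1, b + 1) = 1" using occupied by auto
next
  assume "\<sigma> (1, b) = 1 \<or> \<sigma> (1, b + 1) = 1"
  moreover have "face (a, b) \<subseteq> tile (1, b)" "face (a, b) \<subseteq> tile (1, b + 1)"
    using assms(2,3) by (simp_all add: face_subset_tile_iff)
  ultimately show "\<exists>u. \<sigma> u = 1 \<and> face (a, b) \<subseteq> tile u" by blast
qed

lemma even_strip_next_row: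
  assumes "\<sigma> \<in> even_strip L"
  shows "\<sigma> (1, int i + 1) = \<sigma> (1, int ((i + 1) mod L))"
  using even_strip_eq[OF assms, of 1 "int i + 1"] by (simp add: zmod_int add.commute)

lemma vacant_even_strip_iff:
  assumes \<sigma>: "\<sigma> \<in> even_strip L" and "0 \<le> a" "a \<le> 1" and "i < L"
  shows "vacant \<sigma> (a, int i) \<longleftrightarrow> i \<in> empty_pairs (column_word L \<sigma>)"
proof -
  have "Suc i mod L < L" using \<open>i < L\<close> by simp
  then show ?thesis
    using \<open>i < L\<close> even_strip_covered_iff[OF \<sigma> \<open>0 \<le> a\<close> \<open>a \<le> 1\<close>] even_strip_next_row[OF \<sigma>]
    by (simp add: vacant_def empty_pairs_def column_word_nth)
qed

lemma n_vacant_even_strip: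
  assumes \<sigma>: "\<sigma> \<in> even_strip L"
  shows "n_vacant 2 L \<sigma> = 2 * card (empty_pairs (column_word L \<sigma>))"
proof -
  have "{f. face f \<subseteq> rect 2 L \<and> vacant \<sigma> f} = {0, 1} \<times> int ` empty_pairs (column_word L \<sigma>)"
  proof (intro set_eqI iffI)
    fix f :: "int \<times> int"
    assume f: "f \<in> {f. face f \<subseteq> rect 2 L \<and> vacant \<sigma> f}"
    obtain a i where "f = (a, int i)" "0 \<le> a" "a \<le> 1" "i < L"
      using f by (cases f) (auto simp: face_subset_rect_iff intro: nonneg_int_cases)
    then show "f \<in> {0, 1} \<times> int ` empty_pairs (column_word L \<sigma>)"
      using f vacant_even_strip_iff[OF \<sigma>] by auto
  next
    fix f :: "int \<times> int"
    assume "f \<in> {0, 1} \<times> int ` empty_pairs (column_word L \<sigma>)"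
    then obtain a i where "f = (a, int i)" "a \<in> {0, 1}" "i \<in> empty_pairs (column_word L \<sigma>)"
      by auto
    moreover have "i < L" using \<open>i \<in> empty_pairs _\<close> by (simp add: empty_pairs_def)
    ultimately show "f \<in> {f. face f \<subseteq> rect 2 L \<and> vacant \<sigma> f}"
      using vacant_even_strip_iff[OF \<sigma>] by (auto simp: face_subset_rect_iff)
  qed
  then show ?thesis
    by (simp add: n_vacant_def card_cartesian_product card_image)
qed

lemma cyclically_independent_column_word:
  assumes \<sigma>: "\<sigma> \<in> even_strip L"
  shows "cyclically_independent (column_word L \<sigma>)"
  unfolding cyclically_independent_def length_column_word
proof (intro allI impI notI)
  fix i assume "i < L" and "column_word L \<sigma> ! i \<and> column_word L \<sigma> ! ((i + 1) mod L)"
  then have "\<sigma> (1, int i) = 1" "\<sigma> (1, int i + 1) = 1"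
    using even_strip_next_row[OF \<sigma>] by (simp_all add: column_word_nth)
  moreover have "\<sigma> \<in> Omega" using \<sigma> by (simp add: even_strip_def Omega_per_def)
  ultimately have "interior (tile (1, int i)) \<inter> interior (tile (1, int i + 1)) = {}"
    unfolding Omega_def by auto
  then show False using interior_tiles_overlap_iff[of "(1, int i)" "(1, int i + 1)"] by simp
qed

lemma weight_even_strip:
  assumes \<sigma>: "\<sigma> \<in> even_strip L" and "0 < lam"
  shows "weight 2 L lam \<sigma> = cyclic_weight (lam powr (-1/2)) (column_word L \<sigma>)"
proof -
  define k where "k = card (empty_pairs (column_word L \<sigma>))"
  have "weight 2 L lam \<sigma> = lam powr ((-1/2) * real k)"
    by (simp add: weight_def n_vacant_even_strip[OF \<sigma>] k_def)
  also have "\<dots> = (lam powr (-1/2)) powr real k"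
    by (simp add: powr_powr)
  also have "\<dots> = (lam powr (-1/2)) ^ k"
    using \<open>0 < lam\<close> by (simp add: powr_realpow)
  finally show ?thesis
    using cyclically_independent_column_word[OF \<sigma>] by (simp add: cyclic_weight_eq k_def)
qed

lemma column_word_surj:
  assumes "0 < L" and "length s = L" and "cyclically_independent s"
  shows "s \<in> column_word L ` even_strip L"
proof
  define \<sigma> :: config where "\<sigma> = (\<lambda>(x, y). if odd x \<and> s ! nat (y mod int L) then 1 else 0)"
  have row: "nat (y mod int L) < L" for y
    using \<open>0 < L\<close> by (simp add: nat_less_iff)
  have next_row: "nat ((y + 1) mod int L) = (nat (y mod int L) + 1) mod L" for y
  proof -
    have "int ((nat (y mod int L) + 1) mod L) = (y mod int L + 1) mod int L"
      using \<open>0 < L\<close> by (simp add: zmod_int add.commute)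
    also have "\<dots> = (y + 1) mod int L" by (simp add: mod_add_left_eq)
    finally show ?thesis by simp
  qed
  have no_adjacent: "\<not> (s ! nat (y mod int L) \<and> s ! nat ((y + 1) mod int L))" for y
    using assms(2,3) row[of y] by (simp add: cyclically_independent_def next_row)
  have "\<sigma> \<in> Omega"
    unfolding Omega_def
  proof (intro CollectI conjI allI impI)
    show "\<sigma> u \<in> {0, 1}" for u by (simp add: \<sigma>_def split: prod.split)
    fix u v assume occupied: "\<sigma> u = 1 \<and> \<sigma> v = 1 \<and> u \<noteq> v"
    obtain x y x' y' where uv: "u = (x, y)" "v = (x', y')" by fastforce
    show "interior (tile u) \<inter> interior (tile v) = {}"
    proof (rule ccontr)
      assume "interior (tile u) \<inter> interior (tile v) \<noteq> {}"
      then have "\<bar>x - x'\<bar> < 2" "\<bar>y - y'\<bar> < 2" using uv by (simp_all add: interior_tiles_overlap_iff)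
      moreover have "odd x" "odd x'" "s ! nat (y mod int L)" "s ! nat (y' mod int L)"
        using occupied uv by (auto simp: \<sigma>_def split: if_splits)
      ultimately have "x = x'" by presburger
      then have "y \<noteq> y'" using occupied uv by auto
      then have "y' = y + 1 \<or> y = y' + 1" using \<open>\<bar>y - y'\<bar> < 2\<close> by auto
      then show False
        using no_adjacent[of y] no_adjacent[of y'] \<open>s ! nat (y mod int L)\<close> \<open>s ! nat (y' mod int L)\<close>
        by auto
    qed
  qed
  then show "\<sigma> \<in> even_strip L"
    by (auto simp: even_strip_def Omega_per_def E_even_h_def hparity_def \<sigma>_def split: if_splits)
  show "s = column_word L \<sigma>"
    using assms(2) by (intro nth_equalityI) (simp_all add: column_word_nth \<sigma>_def)
qed

lemma Z_per_even_strip: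
  assumes "0 < L" and "0 < lam"
  shows "Z_per 2 L lam E_even_h = (\<Sum>s | length s = L. cyclic_weight (lam powr (-1/2)) s)"
proof -
  let ?w = "cyclic_weight (lam powr (-1/2))"
  have "Z_per 2 L lam E_even_h = (\<Sum>\<sigma>\<in>even_strip L. ?w (column_word L \<sigma>))"
    unfolding Z_per_def even_strip_def[symmetric]
    using weight_even_strip \<open>0 < lam\<close> by (intro sum.cong) auto
  also have "\<dots> = (\<Sum>s\<in>column_word L ` even_strip L. ?w s)"
    using column_word_inj_on[OF \<open>0 < L\<close>] by (simp add: sum.reindex)
  also have "\<dots> = (\<Sum>s | length s = L. ?w s)"
  proof (rule sum.mono_neutral_left)
    show "column_word L ` even_strip L \<subseteq> {s. length s = L}" by auto
    show "\<forall>s\<in>{s. length s = L} - column_word L ` even_strip L. ?w s = 0"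
      using column_word_surj[OF \<open>0 < L\<close>] by (auto simp: cyclic_weight_eq)
  qed (rule finite_bool_lists_length)
  finally show ?thesis .
qed

theorem proposition4p2:
  fixes lam :: real and L :: nat
  assumes "lam > 0" and "even L" and "L \<ge> 2"
  shows "Z_per 2 L lam E_even_h \<ge> (1 + (1/2) * lam powr (-1/2)) ^ L"
proof -
  have "(1 + (1/2) * lam powr (-1/2)) ^ L \<le> (\<Sum>s | length s = L. cyclic_weight (lam powr (-1/2)) s)"
    using sum_cyclic_weight_ge[of "lam powr (-1/2)" L] assms by simp
  also have "\<dots> = Z_per 2 L lam E_even_h"
    using Z_per_even_strip assms by simp
  finally show ?thesis .
qed

end
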